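(* For every integer $n\ge2$, the $n$-th Bernoulli number satisfies $B_n=(-1)^n\,q_{n-1}(1)\,n!$.
   Context: The Bernoulli numbers $B_n$ are defined by $\frac{z}{e^z-1}=\sum_{n\ge0}\frac{B_n}{n!}z^n$ for $|z|<2\pi$. The polynomials $p_j,q_j$ ($j\ge1$) are defined recursively by $p_1(x)=\frac{x-x^2}{2}$, $q_j(x)=\int_0^xp_j(t)\,dt$, and $p_{j+1}(x)=q_j(x)-x\,q_j(1)$. *)

theory Defs
  imports "HOL-Analysis.Analysis"
begin

text \<open>Bernoulli numbers, defined by the generating function
  z/(e^z - 1) = sum_n B_n/n! z^n for |z| < 2 pi (z real, z \<noteq> 0, where the
  left-hand side is literally defined; the coefficients are determined uniquely).\<close>
definition bernoulli :: "nat \<Rightarrow> real" where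
  "bernoulli = (THE B. \<forall>z::real. z \<noteq> 0 \<and> \<bar>z\<bar> < 2 * pi \<longrightarrow>
       (\<lambda>n. B n / fact n * z ^ n) sums (z / (exp z - 1)))"

definition int0 :: "(real \<Rightarrow> real) \<Rightarrow> real \<Rightarrow> real" where
  "int0 f x = (if 0 \<le> x then integral {0..x} f else - integral {x..0} f)"

text \<open>p_1(x) = (x - x^2)/2, p_{j+1}(x) = q_j(x) - x q_j(1), q_j(x) = int_0^x p_j.
  Index 0 is a dummy value (the paper's sequences start at j = 1).\<close>
fun pp :: "nat \<Rightarrow> real \<Rightarrow> real" where
  "pp 0 x = 0"
| "pp (Suc 0) x = (x - x^2) / 2"
| "pp (Suc (Suc j)) x = int0 (pp (Suc j)) x - x * int0 (pp (Suc j)) 1"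

definition qq :: "nat \<Rightarrow> real \<Rightarrow> real" where
  "qq j x = int0 (pp j) x"

end

theory Submission
  imports Defs "HOL-Complex_Analysis.Complex_Analysis"
begin

text \<open>The Bernoulli numbers are \<open>n!\<close> times the Taylor coefficients \<open>b\<^sub>n\<close> of \<open>z/(e\<^sup>z - 1)\<close>,
  whose formal power series \<open>X/(e\<^sup>X - 1)\<close> converges on the disc of radius \<open>2\<pi>\<close>.
  Comparing coefficients in \<open>(e\<^sup>X - 1) \<cdot> X/(e\<^sup>X - 1) = X\<close> gives
  \<open>\<Sum>\<^sub>k\<^sub>\<le>\<^sub>m b\<^sub>k/(m+1-k)! = [m = 0]\<close>. With it, induction on \<open>j\<close> shows
  \<open>p\<^sub>j(x) = -\<Sum>\<^sub>k\<^sub>\<le>\<^sub>j b\<^sub>k x\<^sup>j\<^sup>+\<^sup>1\<^sup>-\<^sup>k/(j+1-k)!\<close>, and the same identity then evaluates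
  \<open>q\<^sub>j(1) = b\<^sub>j\<^sub>+\<^sub>1\<close>. The sign is harmless because \<open>z/(e\<^sup>z - 1) + z/2\<close> is even, so
  \<open>b\<^sub>n = 0\<close> for odd \<open>n \<ge> 3\<close>.\<close>

lemma powser_const_coeff_eq_0:
  fixes d :: "nat \<Rightarrow> real"
  assumes "r > 0" and sums_0: "\<And>z. z \<noteq> 0 \<Longrightarrow> \<bar>z\<bar> < r \<Longrightarrow> (\<lambda>n. d n * z ^ n) sums 0"
  shows "d 0 = 0"
proof -
  let ?f = "\<lambda>x. \<Sum>n. d n * x ^ n"
  have "summable (\<lambda>n. d n * (r / 2) ^ n)"
    using sums_0[of "r / 2"] \<open>r > 0\<close> by (auto intro: sums_summable)
  hence "isCont ?f 0"
    using \<open>r > 0\<close> by (intro isCont_powser) auto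
  hence "(?f \<longlongrightarrow> d 0) (at 0)"
    by (simp add: isCont_def)
  moreover have "\<forall>\<^sub>F x in at 0. ?f x = 0"
    unfolding eventually_at
    using \<open>r > 0\<close> sums_0 by (auto simp: sums_iff intro!: exI[of _ r])
  hence "(?f \<longlongrightarrow> 0) (at 0)"
    by (simp add: tendsto_eventually)
  ultimately show ?thesis
    by (rule tendsto_unique[OF at_neq_bot])
qed

lemma powser_coeffs_eq_0:
  fixes d :: "nat \<Rightarrow> real"
  assumes "r > 0" and "\<And>z. z \<noteq> 0 \<Longrightarrow> \<bar>z\<bar> < r \<Longrightarrow> (\<lambda>n. d n * z ^ n) sums 0"
  shows "d n = 0"
  using assms(2)
proof (induction n arbitrary: d)
  case 0
  then show ?case using powser_const_coeff_eq_0[OF \<open>r > 0\<close>] by blast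
next
  case (Suc n)
  have "(\<lambda>k. d (Suc k) * z ^ k) sums 0" if z: "z \<noteq> 0" "\<bar>z\<bar> < r" for z
  proof -
    have "d 0 = 0"
      using powser_const_coeff_eq_0[OF \<open>r > 0\<close>] Suc.prems by blast
    with Suc.prems[OF z] have "(\<lambda>k. d (Suc k) * z ^ Suc k) sums 0"
      using sums_Suc_iff[of "\<lambda>k. d k * z ^ k" 0] by (simp del: power_Suc)
    hence "(\<lambda>k. z * (d (Suc k) * z ^ k)) sums 0"
      by (simp add: mult_ac)
    from sums_mult_D[OF this \<open>z \<noteq> 0\<close>] show ?thesis by simp
  qed
  from Suc.IH[OF this] show ?case .
qed

lemma powser_coeffs_unique:
  fixes c d :: "nat \<Rightarrow> real"
  assumes "r > 0"
    and "\<And>z. z \<noteq> 0 \<Longrightarrow> \<bar>z\<bar> < r \<Longrightarrow> (\<lambda>n. c n * z ^ n) sums f z"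
    and "\<And>z. z \<noteq> 0 \<Longrightarrow> \<bar>z\<bar> < r \<Longrightarrow> (\<lambda>n. d n * z ^ n) sums f z"
  shows "c = d"
proof
  fix n
  have "c n - d n = 0"
  proof (rule powser_coeffs_eq_0[OF \<open>r > 0\<close>])
    fix z :: real assume "z \<noteq> 0" "\<bar>z\<bar> < r"
    from sums_diff[OF assms(2,3)[OF this]]
    show "(\<lambda>n. (c n - d n) * z ^ n) sums 0" by (simp add: left_diff_distrib)
  qed
  then show "c n = d n" by simp
qed

definition bernoulli_fps :: "complex fps" where
  "bernoulli_fps = fps_X / (fps_exp 1 - 1)"

definition bernoulli_fun :: "complex \<Rightarrow> complex" where
  "bernoulli_fun z = (if z = 0 then 1 else z / (exp z - 1))"

lemma subdegree_fps_exp_minus_one: "subdegree (fps_exp (1::complex) - 1) = 1"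
  by (rule subdegreeI) auto

lemma subdegree_one_minus_fps_exp: "subdegree (1 - fps_exp (1::complex)) = 1"
  by (rule subdegreeI) auto

lemma has_fps_expansion_bernoulli_fun: "bernoulli_fun has_fps_expansion bernoulli_fps"
  unfolding bernoulli_fun_def bernoulli_fps_def
  by (rule has_fps_expansion_divide)
     (auto intro!: fps_expansion_intros
           simp: subdegree_fps_exp_minus_one subdegree_one_minus_fps_exp)

lemma bernoulli_fps_times_exp_minus_one: "bernoulli_fps * (fps_exp 1 - 1) = fps_X"
proof -
  have "(fps_exp (1::complex) - 1) dvd fps_X"
    by (subst fps_dvd_iff) (auto simp: subdegree_fps_exp_minus_one subdegree_one_minus_fps_exp)
  thus ?thesis
    unfolding bernoulli_fps_def by simp
qed

lemma exp_neq_1_in_ball: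
  assumes "z \<noteq> 0" "norm z < 2 * pi"
  shows "exp z \<noteq> (1::complex)"
proof
  assume "exp z = 1"
  then obtain n :: int where n: "Re z = 0" "Im z = of_int (2 * n) * pi"
    by (auto simp: exp_eq_1)
  have "n \<noteq> 0"
    using n \<open>z \<noteq> 0\<close> complex_eqI by force
  hence "2 * pi \<le> \<bar>Im z\<bar>"
    using n by (auto simp: abs_mult)
  with abs_Im_le_cmod[of z] \<open>norm z < 2 * pi\<close> show False
    by linarith
qed

lemma holomorphic_bernoulli_fun: "bernoulli_fun holomorphic_on ball 0 (2 * pi)"
proof -
  obtain S where S: "open S" "0 \<in> S" "bernoulli_fun holomorphic_on S"
    using has_fps_expansion_imp_holomorphic[OF has_fps_expansion_bernoulli_fun] by blast
  have "(\<lambda>z. z / (exp z - 1)) holomorphic_on ball 0 (2 * pi) - {0}"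
    using exp_neq_1_in_ball by (intro holomorphic_intros) auto
  hence "bernoulli_fun holomorphic_on ball 0 (2 * pi) - {0}"
    by (rule holomorphic_transform) (auto simp: bernoulli_fun_def)
  hence "bernoulli_fun holomorphic_on (ball 0 (2 * pi) - {0}) \<union> (S \<inter> ball 0 (2 * pi))"
    using S by (intro holomorphic_on_Un) (auto intro: holomorphic_on_subset)
  moreover have "(ball 0 (2 * pi) - {0}) \<union> (S \<inter> ball 0 (2 * pi)) = ball 0 (2 * pi)"
    using S by auto
  ultimately show ?thesis
    by simp
qed

lemma sums_bernoulli_fps:
  "norm z < 2 * pi \<Longrightarrow> (\<lambda>n. fps_nth bernoulli_fps n * z ^ n) sums bernoulli_fun z"
  by (rule has_fps_expansion_imp_sums_complex[OF has_fps_expansion_bernoulli_fun,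
        where r = "ereal (2 * pi)"])
     (use holomorphic_bernoulli_fun in auto)

definition bernoulli_coeff :: "nat \<Rightarrow> real" where
  "bernoulli_coeff n = Re (fps_nth bernoulli_fps n)"

lemma bernoulli_coeff_recurrence:
  "(\<Sum>i\<le>m. bernoulli_coeff i / fact (Suc m - i)) = (if m = 0 then 1 else 0)"
proof -
  have exp_coeff: "fps_nth (fps_exp (1::complex) - 1) (Suc m - i) = 1 / fact (Suc m - i)"
    if "i \<le> m" for i
  proof -
    have "fps_nth (fps_exp (1::complex) - 1) (Suc k) = 1 / fact (Suc k)" for k
      by (simp add: fps_exp_def)
    with that show ?thesis
      by (simp only: Suc_diff_le)
  qed
  have "fps_nth (bernoulli_fps * (fps_exp 1 - 1)) (Suc m)
          = (\<Sum>i\<le>Suc m. fps_nth bernoulli_fps i * fps_nth (fps_exp 1 - 1) (Suc m - i))"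
    by (simp only: fps_mult_nth atLeast0AtMost)
  also have "\<dots> = (\<Sum>i\<le>m. fps_nth bernoulli_fps i * fps_nth (fps_exp 1 - 1) (Suc m - i))"
    by (subst sum.atMost_Suc) simp
  also have "\<dots> = (\<Sum>i\<le>m. fps_nth bernoulli_fps i / fact (Suc m - i))"
    by (rule sum.cong) (simp_all add: exp_coeff divide_inverse)
  finally have "(\<Sum>i\<le>m. fps_nth bernoulli_fps i / fact (Suc m - i)) = (if m = 0 then 1 else 0)"
    by (simp add: bernoulli_fps_times_exp_minus_one)
  hence "Re (\<Sum>i\<le>m. fps_nth bernoulli_fps i / fact (Suc m - i)) = (if m = 0 then 1 else 0)"
    by simp
  moreover have "Re (c / fact k) = Re c / fact k" for c :: complex and k
    by (metis Re_divide_of_real of_real_fact)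
  ultimately show ?thesis
    by (simp add: Re_sum bernoulli_coeff_def)
qed

lemma sums_bernoulli_coeff:
  assumes "z \<noteq> 0" "\<bar>z\<bar> < 2 * pi"
  shows "(\<lambda>n. bernoulli_coeff n * z ^ n) sums (z / (exp z - 1))"
proof -
  have "(\<lambda>n. fps_nth bernoulli_fps n * of_real z ^ n) sums bernoulli_fun (of_real z)"
    using assms by (intro sums_bernoulli_fps) auto
  from sums_Re[OF this] have "(\<lambda>n. bernoulli_coeff n * z ^ n) sums Re (bernoulli_fun (of_real z))"
    by (simp add: bernoulli_coeff_def flip: of_real_power)
  also have "bernoulli_fun (of_real z) = of_real (z / (exp z - 1))"
    using assms by (simp add: bernoulli_fun_def exp_of_real)
  finally show ?thesis
    by simp
qed

lemma bernoulli_eq_fact_times_coeff: "bernoulli = (\<lambda>n. bernoulli_coeff n * fact n)"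
  unfolding bernoulli_def
proof (rule the_equality)
  fix B
  assume B: "\<forall>z::real. z \<noteq> 0 \<and> \<bar>z\<bar> < 2 * pi \<longrightarrow>
               (\<lambda>n. B n / fact n * z ^ n) sums (z / (exp z - 1))"
  have "(\<lambda>n. B n / fact n) = bernoulli_coeff"
  proof (rule powser_coeffs_unique[where r = "2 * pi"])
    fix z :: real
    assume "z \<noteq> 0" "\<bar>z\<bar> < 2 * pi"
    then show "(\<lambda>n. B n / fact n * z ^ n) sums (z / (exp z - 1))"
      using B by blast
  qed (simp_all add: sums_bernoulli_coeff)
  then show "B = (\<lambda>n. bernoulli_coeff n * fact n)"
    by (simp add: fun_eq_iff divide_eq_eq)
qed (simp add: sums_bernoulli_coeff)

lemma bernoulli_coeff_odd:
  assumes "odd n" "n \<noteq> 1"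
  shows "bernoulli_coeff n = 0"
proof -
  have "(\<lambda>n. (-1) ^ n * bernoulli_coeff n) = (\<lambda>n. bernoulli_coeff n + (if n = 1 then 1 else 0))"
  proof (rule powser_coeffs_unique[where r = "2 * pi" and f = "\<lambda>z. z / (exp z - 1) + z"])
    fix z :: real
    assume z: "z \<noteq> 0" "\<bar>z\<bar> < 2 * pi"
    have "(\<lambda>n. bernoulli_coeff n * (-z) ^ n) sums (-z / (exp (-z) - 1))"
      using z by (intro sums_bernoulli_coeff) auto
    \<comment> \<open>\<open>z/(e\<^sup>z - 1) + z/2\<close> is even\<close>
    also have "-z / (exp (-z) - 1) = z / (exp z - 1) + z"
      using z by (simp add: exp_minus field_simps)
    finally show "(\<lambda>n. (-1) ^ n * bernoulli_coeff n * z ^ n) sums (z / (exp z - 1) + z)"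
      by (simp add: power_minus[of z] mult_ac)
  next
    fix z :: real
    assume z: "z \<noteq> 0" "\<bar>z\<bar> < 2 * pi"
    have "(\<lambda>n. (if n = 1 then 1 else 0) * z ^ n) = (\<lambda>n. if n = 1 then z ^ n else 0)"
      by auto
    with sums_single[of 1 "\<lambda>n. z ^ n"] have "(\<lambda>n. (if n = 1 then 1 else 0) * z ^ n) sums z"
      by simp
    from sums_add[OF sums_bernoulli_coeff[OF z] this]
    show "(\<lambda>n. (bernoulli_coeff n + (if n = 1 then 1 else 0)) * z ^ n) sums (z / (exp z - 1) + z)"
      by (simp add: distrib_right)
  qed simp
  from fun_cong[OF this, of n] assms show ?thesis
    by simp
qed

lemma has_real_derivative_power_div_fact:
  "((\<lambda>x::real. x ^ Suc n / fact (Suc n)) has_real_derivative x ^ n / fact n) (at x)"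
proof -
  have "((\<lambda>x::real. x ^ Suc n / fact (Suc n)) has_real_derivative
          (of_nat (Suc n) * x ^ n) / fact (Suc n)) (at x)"
    using DERIV_cdivide[OF DERIV_pow[of "Suc n" x], of "fact (Suc n)"] by simp
  moreover have "(of_nat (Suc n) * x ^ n) / fact (Suc n) = x ^ n / (fact n :: real)"
    by (simp add: field_simps del: of_nat_Suc)
  ultimately show ?thesis
    by simp
qed

lemma int0_eq_antiderivative:
  assumes deriv: "\<And>t. (F has_real_derivative f t) (at t)" and "F 0 = 0"
  shows "int0 f x = F x"
proof -
  have "integral {a..b} f = F b - F a" if "a \<le> b" for a b
    using that deriv
    by (intro integral_unique fundamental_theorem_of_calculus)
       (auto simp flip: has_real_derivative_iff_has_vector_derivative
             intro: has_field_derivative_at_within)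
  then show ?thesis
    using \<open>F 0 = 0\<close> by (cases "0 \<le> x") (simp_all add: int0_def)
qed

text \<open>\<open>bernoulli_antideriv m j\<close> is the \<open>m\<close>-th antiderivative, vanishing at 0 to order \<open>m\<close>,
  of \<open>x \<mapsto> -\<Sum>\<^sub>k\<^sub>\<le>\<^sub>j b\<^sub>k x\<^sup>j\<^sup>-\<^sup>k/(j-k)!\<close>; the paper's \<open>p\<^sub>j\<close> and \<open>q\<^sub>j\<close> are the cases
  \<open>m = 1\<close> and \<open>m = 2\<close>.\<close>

definition bernoulli_antideriv :: "nat \<Rightarrow> nat \<Rightarrow> real \<Rightarrow> real" where
  "bernoulli_antideriv m j x =
     - (\<Sum>k\<le>j. bernoulli_coeff k * (x ^ (j + m - k) / fact (j + m - k)))"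

lemma has_real_derivative_bernoulli_antideriv:
  "(bernoulli_antideriv (Suc m) j has_real_derivative bernoulli_antideriv m j x) (at x)"
proof -
  have "bernoulli_antideriv (Suc m) j = (\<lambda>x. - (\<Sum>k\<le>j. bernoulli_coeff k *
          (x ^ Suc (j + m - k) / fact (Suc (j + m - k)))))"
    by (auto simp: fun_eq_iff bernoulli_antideriv_def Suc_diff_le intro!: sum.cong)
  then show ?thesis
    unfolding bernoulli_antideriv_def[of m]
    by (simp only:) (intro DERIV_minus DERIV_sum DERIV_cmult has_real_derivative_power_div_fact)
qed

lemma int0_bernoulli_antideriv:
  "int0 (bernoulli_antideriv m j) x = bernoulli_antideriv (Suc m) j x"
  by (rule int0_eq_antiderivative[OF has_real_derivative_bernoulli_antideriv])
     (auto simp: bernoulli_antideriv_def intro!: sum.neutral)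

lemma bernoulli_antideriv_2_at_1: "bernoulli_antideriv 2 j 1 = bernoulli_coeff (Suc j)"
proof -
  have "0 = (\<Sum>i\<le>Suc j. bernoulli_coeff i / fact (Suc (Suc j) - i))"
    using bernoulli_coeff_recurrence[of "Suc j"] by simp
  also have "\<dots> = bernoulli_coeff (Suc j) + (\<Sum>i\<le>j. bernoulli_coeff i / fact (Suc (Suc j) - i))"
    by (simp add: sum.atMost_Suc)
  also have "(\<Sum>i\<le>j. bernoulli_coeff i / fact (Suc (Suc j) - i)) = - bernoulli_antideriv 2 j 1"
    by (auto simp: bernoulli_antideriv_def intro!: sum.cong)
  finally show ?thesis
    by simp
qed

lemma bernoulli_antideriv_1_Suc:
  "bernoulli_antideriv 1 (Suc j) x = bernoulli_antideriv 2 j x - x * bernoulli_coeff (Suc j)"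
proof -
  have "(\<Sum>k\<le>j. bernoulli_coeff k * (x ^ (Suc j + 1 - k) / fact (Suc j + 1 - k)))
          = (\<Sum>k\<le>j. bernoulli_coeff k * (x ^ (j + 2 - k) / fact (j + 2 - k)))"
    by (auto intro!: sum.cong)
  then show ?thesis
    by (simp add: bernoulli_antideriv_def sum.atMost_Suc)
qed

lemma pp_eq_bernoulli_antideriv: "pp (Suc j) = bernoulli_antideriv 1 (Suc j)"
proof (induction j)
  case 0
  have "bernoulli_coeff 0 = 1" "bernoulli_coeff 1 = -1/2"
    using bernoulli_coeff_recurrence[of 0] bernoulli_coeff_recurrence[of 1]
    by (simp_all add: numeral_2_eq_2)
  then show ?case
    by (auto simp: fun_eq_iff bernoulli_antideriv_def power2_eq_square field_simps)
next
  case (Suc j)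
  show ?case
  proof
    fix x
    have "pp (Suc (Suc j)) x = int0 (pp (Suc j)) x - x * int0 (pp (Suc j)) 1"
      by (simp only: pp.simps)
    also have "\<dots> = bernoulli_antideriv 2 (Suc j) x - x * bernoulli_coeff (Suc (Suc j))"
      by (simp only: Suc.IH int0_bernoulli_antideriv Suc_1 bernoulli_antideriv_2_at_1)
    also have "\<dots> = bernoulli_antideriv 1 (Suc (Suc j)) x"
      by (rule bernoulli_antideriv_1_Suc [symmetric])
    finally show "pp (Suc (Suc j)) x = bernoulli_antideriv 1 (Suc (Suc j)) x" .
  qed
qed

lemma qq_Suc_at_1: "qq (Suc j) 1 = bernoulli_coeff (Suc (Suc j))"
  by (simp only: qq_def pp_eq_bernoulli_antideriv int0_bernoulli_antideriv Suc_1
      bernoulli_antideriv_2_at_1)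

theorem corollary9:
  fixes n :: nat
  assumes "n \<ge> 2"
  shows "bernoulli n = (-1) ^ n * qq (n - 1) 1 * fact n"
proof -
  obtain j where n: "n = Suc (Suc j)"
    using assms by (metis add_2_eq_Suc le_Suc_ex)
  have "(-1) ^ n * bernoulli_coeff n = bernoulli_coeff n"
    using bernoulli_coeff_odd[of n] n by (cases "even n") auto
  then show ?thesis
    using n by (simp add: bernoulli_eq_fact_times_coeff qq_Suc_at_1)
qed

end
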